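(* Let $N\ge 1$, $0<s<1$ and $1<p<\infty$ be such that $s\,p>N$. For every $r>0$, $x_0\in\mathbb{R}^N$ and $\varphi\in C^1(\overline{B_r(x_0)})$ with $\varphi(x_0)=0$, we have \[ |\varphi(x)|\le \left(\frac{1}{\omega_N\,\Lambda_{s,p}(B_1(0))}\right)^\frac{1}{p}\,\frac{\big(r-|x-x_0|\big)^s+r^s}{\big(r-|x-x_0|\big)^\frac{N}{p}}\,[\varphi]_{W^{s,p}(B_r(x_0))},\quad \mbox{ for every } x\in B_r(x_0). \]
   Context: $\omega_N$ is the Lebesgue measure of the unit ball of $\mathbb{R}^N$. For an open set $\Omega$, $[\varphi]_{W^{s,p}(\Omega)}=\left(\iint_{\Omega\times\Omega}\frac{|\varphi(x)-\varphi(y)|^p}{|x-y|^{N+s\,p}}dx\,dy\right)^{1/p}$. For a ball $B_r(x_0)$, $\Lambda_{s,p}(B_r(x_0))=\inf\{[\varphi]^p_{W^{s,p}(B_r(x_0))}:\varphi\in C^1(\overline{B_r(x_0)}),\ \|\varphi\|_{L^p(B_r(x_0))}=1,\ \varphi(x_0)=0\}$. *)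

theory Defs
  imports "HOL-Analysis.Analysis"
begin

definition omega :: "'a::euclidean_space itself \<Rightarrow> real" where
  "omega _ = measure lborel (ball (0::'a) 1)"

definition gagliardo_pow :: "real \<Rightarrow> real \<Rightarrow> 'a::euclidean_space set \<Rightarrow> ('a \<Rightarrow> real) \<Rightarrow> ennreal" where
  "gagliardo_pow s p \<Omega> \<phi> =
     (\<integral>\<^sup>+ z. indicator (\<Omega> \<times> \<Omega>) z *
        ennreal (\<bar>\<phi> (fst z) - \<phi> (snd z)\<bar> powr p /
                 norm (fst z - snd z) powr (real DIM('a) + s * p)) \<partial>(lborel \<Otimes>\<^sub>M lborel))"

definition gagliardo :: "real \<Rightarrow> real \<Rightarrow> 'a::euclidean_space set \<Rightarrow> ('a \<Rightarrow> real) \<Rightarrow> real" where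
  "gagliardo s p \<Omega> \<phi> = enn2real (gagliardo_pow s p \<Omega> \<phi>) powr (1 / p)"

definition C1_closure :: "'a::euclidean_space set \<Rightarrow> ('a \<Rightarrow> real) \<Rightarrow> bool" where
  "C1_closure S \<phi> \<longleftrightarrow> continuous_on (closure S) \<phi> \<and>
     (\<exists>D :: 'a \<Rightarrow> ('a \<Rightarrow>\<^sub>L real).
        (\<forall>x\<in>S. (\<phi> has_derivative blinfun_apply (D x)) (at x)) \<and> continuous_on (closure S) D)"

definition Lp_norm :: "real \<Rightarrow> 'a::euclidean_space set \<Rightarrow> ('a \<Rightarrow> real) \<Rightarrow> real" where
  "Lp_norm p \<Omega> \<phi> = enn2real (\<integral>\<^sup>+ x. indicator \<Omega> x * ennreal (\<bar>\<phi> x\<bar> powr p) \<partial>lborel) powr (1 / p)"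

definition Lambda :: "real \<Rightarrow> real \<Rightarrow> 'a::euclidean_space \<Rightarrow> real \<Rightarrow> real" where
  "Lambda s p x0 r = Inf {gagliardo s p (ball x0 r) \<phi> powr p | \<phi>.
       C1_closure (ball x0 r) \<phi> \<and> Lp_norm p (ball x0 r) \<phi> = 1 \<and> \<phi> x0 = 0}"

end

theory Submission
  imports Defs
begin

(*
  Rescaling the minimisation problem that defines Lambda = Lambda_{s,p}(B_1(0)) gives, for every
  C^1 function psi vanishing at the centre of a ball B_rho(c), the Poincare-type inequality
    ||psi||_{L^p(B_rho(c))} <= rho^s [psi]_{W^{s,p}(B_rho(c))} / Lambda^(1/p).
  Given x in B_r(x0), let R = r - |x - x0|, so that B_R(x) lies in B_r(x0). Minkowski's inequality
  on B_R(x) for the constant phi(x) = phi - (phi - phi(x)) gives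
    |phi(x)| |B_R|^(1/p) <= ||phi||_{L^p(B_R(x))} + ||phi - phi(x)||_{L^p(B_R(x))},
  and the Poincare inequality for phi on B_r(x0) and for phi - phi(x) on B_R(x) bounds the two
  terms by r^s and R^s times [phi]_{W^{s,p}(B_r(x0))} / Lambda^(1/p).

  This is only meaningful once Lambda > 0 (for Lambda = 0 the right-hand side is 0, as 1/0 = 0),
  and this is where s p > N enters. Minkowski's inequality on the product of two concentric balls
  compares the normalised L^p norms of eta on B_(2^-k) and on B_(2^-(k+1)) up to an error
  C theta^k [eta]_{W^{s,p}(B_1)} with theta = 2^(-(s p - N)/p) < 1. Summing the geometric series and
  using eta(0) = 0 and the continuity of eta gives ||eta||_{L^p(B_1)} <= C' [eta]_{W^{s,p}(B_1)}.
*)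

section \<open>Minkowski's inequality\<close>

lemma powr_add_le_weighted:
  fixes p a b x y :: real
  assumes p: "p \<ge> 1" and a: "a > 0" and b: "b > 0" and x: "x \<ge> 0" and y: "y \<ge> 0"
  shows "(x + y) powr p \<le> (a + b) powr (p - 1) * (x powr p / a powr (p - 1) + y powr p / b powr (p - 1))"
proof (cases "x = 0 \<or> y = 0")
  case True
  have "a powr (p - 1) \<le> (a + b) powr (p - 1)" "b powr (p - 1) \<le> (a + b) powr (p - 1)"
    using a b p by (auto intro!: powr_mono2)
  with True a b show ?thesis
    by (auto simp: field_simps intro!: mult_left_mono)
next
  case False
  have split: "z powr p = z powr (p - 1) * z" if "z > 0" for z :: real
    using that powr_add[of z "p - 1" 1] by simp
  define u v where "u = a / (a + b)" and "v = b / (a + b)"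
  have uv: "v \<ge> 0" "v \<le> 1" "u = 1 - v" "(a + b) * u = a" "(a + b) * v = b"
    using a b by (auto simp: u_def v_def field_simps)
  have "x + y = (a + b) * (u * (x / a) + v * (y / b))"
    using a b by (simp add: distrib_left uv(4,5)[unfolded mult.assoc[symmetric]] mult.assoc[symmetric])
  then have "(x + y) powr p = (a + b) powr p * (u * (x / a) + v * (y / b)) powr p"
    using a b x y uv by (simp add: powr_mult)
  also have "\<dots> \<le> (a + b) powr p * (u * (x / a) powr p + v * (y / b) powr p)"
  proof (rule mult_left_mono)
    show "(u * (x / a) + v * (y / b)) powr p \<le> u * (x / a) powr p + v * (y / b) powr p"
      using convex_onD[OF powr_convex[OF p] uv(1,2), of "x / a" "y / b"] False x y a b
      unfolding uv(3) by simp
  qed simp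
  also have "\<dots> = (a + b) powr (p - 1) * (((a + b) * u) * (x / a) powr p + ((a + b) * v) * (y / b) powr p)"
    using a b by (simp add: split[of "a + b"] algebra_simps)
  also have "\<dots> = (a + b) powr (p - 1) * (a * (x / a) powr p + b * (y / b) powr p)"
    unfolding uv(4,5) ..
  finally have "(x + y) powr p \<le> (a + b) powr (p - 1) * (a * (x / a) powr p + b * (y / b) powr p)" .
  moreover have "a * (x / a) powr p = x powr p / a powr (p - 1)" "b * (y / b) powr p = y powr p / b powr (p - 1)"
    using a b by (simp_all add: powr_divide split)
  ultimately show ?thesis by simp
qed

lemma nn_integral_powr_add_le:
  fixes f g h :: "'b \<Rightarrow> real"
  assumes p: "p \<ge> 1" and a: "a > 0" and b: "b > 0"
    and [measurable]: "g \<in> borel_measurable M" "h \<in> borel_measurable M"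
    and fgh: "\<And>x. x \<in> space M \<Longrightarrow> 0 \<le> f x \<and> f x \<le> g x + h x"
    and gh: "\<And>x. x \<in> space M \<Longrightarrow> 0 \<le> g x \<and> 0 \<le> h x"
    and ga: "(\<integral>\<^sup>+x. ennreal (g x powr p) \<partial>M) \<le> ennreal (a powr p)"
    and hb: "(\<integral>\<^sup>+x. ennreal (h x powr p) \<partial>M) \<le> ennreal (b powr p)"
  shows "(\<integral>\<^sup>+x. ennreal (f x powr p) \<partial>M) \<le> ennreal ((a + b) powr p)"
proof -
  define K where "K c = (a + b) powr (p - 1) / c powr (p - 1)" for c
  have K: "K c \<ge> 0" and Kc: "c > 0 \<Longrightarrow> K c * c powr p = (a + b) powr (p - 1) * c" for c
    using powr_add[of c "p - 1" 1] by (auto simp: K_def)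
  have "(\<integral>\<^sup>+x. ennreal (f x powr p) \<partial>M) \<le>
      (\<integral>\<^sup>+x. ennreal (K a) * ennreal (g x powr p) + ennreal (K b) * ennreal (h x powr p) \<partial>M)"
  proof (rule nn_integral_mono)
    fix x assume x: "x \<in> space M"
    have "f x powr p \<le> (g x + h x) powr p"
      using fgh[OF x] gh[OF x] p by (intro powr_mono2) auto
    also have "\<dots> \<le> K a * g x powr p + K b * h x powr p"
      using powr_add_le_weighted[OF p a b, of "g x" "h x"] gh[OF x] by (simp add: K_def field_simps)
    finally show "ennreal (f x powr p) \<le> ennreal (K a) * ennreal (g x powr p) + ennreal (K b) * ennreal (h x powr p)"
      using K by (simp add: ennreal_mult'[symmetric] ennreal_plus[symmetric] del: ennreal_plus)
  qed
  also have "\<dots> = ennreal (K a) * (\<integral>\<^sup>+x. ennreal (g x powr p) \<partial>M) + ennreal (K b) * (\<integral>\<^sup>+x. ennreal (h x powr p) \<partial>M)"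
    by (simp add: nn_integral_add nn_integral_cmult)
  also have "\<dots> \<le> ennreal (K a) * ennreal (a powr p) + ennreal (K b) * ennreal (b powr p)"
    using ga hb by (intro add_mono mult_left_mono) auto
  also have "\<dots> = ennreal ((a + b) powr (p - 1) * (a + b))"
    using K a b by (simp add: Kc ennreal_mult'[symmetric] ennreal_plus[symmetric] distrib_left del: ennreal_plus)
  also have "(a + b) powr (p - 1) * (a + b) = (a + b) powr p"
    using a b powr_add[of "a + b" "p - 1" 1] by simp
  finally show ?thesis .
qed

lemma nn_integral_powr_Minkowski:
  fixes f g h :: "'b \<Rightarrow> real"
  assumes p: "p \<ge> 1"
    and [measurable]: "g \<in> borel_measurable M" "h \<in> borel_measurable M"
    and fgh: "\<And>x. x \<in> space M \<Longrightarrow> 0 \<le> f x \<and> f x \<le> g x + h x"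
    and gh: "\<And>x. x \<in> space M \<Longrightarrow> 0 \<le> g x \<and> 0 \<le> h x"
    and g_fin: "(\<integral>\<^sup>+x. ennreal (g x powr p) \<partial>M) < \<infinity>"
    and h_fin: "(\<integral>\<^sup>+x. ennreal (h x powr p) \<partial>M) < \<infinity>"
  shows "enn2real (\<integral>\<^sup>+x. ennreal (f x powr p) \<partial>M) powr (1/p) \<le>
    enn2real (\<integral>\<^sup>+x. ennreal (g x powr p) \<partial>M) powr (1/p) +
    enn2real (\<integral>\<^sup>+x. ennreal (h x powr p) \<partial>M) powr (1/p)"
    (is "?F powr (1/p) \<le> ?G powr (1/p) + ?H powr (1/p)")
proof (rule field_le_epsilon)
  fix e :: real assume e: "e > 0"
  define A B where "A = ?G powr (1/p)" and "B = ?H powr (1/p)"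
  have AB: "A \<ge> 0" "B \<ge> 0" by (simp_all add: A_def B_def)
  have upper: "(\<integral>\<^sup>+x. ennreal (u x powr p) \<partial>M) \<le>
      ennreal ((enn2real (\<integral>\<^sup>+x. ennreal (u x powr p) \<partial>M) powr (1/p) + e / 2) powr p)"
    if "(\<integral>\<^sup>+x. ennreal (u x powr p) \<partial>M) < \<infinity>" for u
  proof -
    let ?U = "enn2real (\<integral>\<^sup>+x. ennreal (u x powr p) \<partial>M)"
    have "(\<integral>\<^sup>+x. ennreal (u x powr p) \<partial>M) = ennreal ((?U powr (1/p)) powr p)"
      using that p by (simp add: powr_powr less_top)
    also have "\<dots> \<le> ennreal ((?U powr (1/p) + e / 2) powr p)"
      using e p by (intro ennreal_leI powr_mono2) auto
    finally show ?thesis .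
  qed
  have "(\<integral>\<^sup>+x. ennreal (f x powr p) \<partial>M) \<le> ennreal ((A + B + e) powr p)"
    using nn_integral_powr_add_le[OF p _ _ _ _ fgh gh upper[OF g_fin] upper[OF h_fin]] AB e
    by (simp add: A_def B_def add_ac add_pos_nonneg)
  then have "?F \<le> (A + B + e) powr p"
    by (simp add: enn2real_leI)
  then have "?F powr (1/p) \<le> ((A + B + e) powr p) powr (1/p)"
    using p by (intro powr_mono2) auto
  also have "\<dots> = A + B + e"
    using AB e p by (simp add: powr_powr)
  finally show "?F powr (1/p) \<le> ?G powr (1/p) + ?H powr (1/p) + e"
    by (simp add: A_def B_def)
qed

section \<open>\<open>L\<^sup>p\<close> norms on subsets of Euclidean space\<close>

lemma omega_eq_unit_ball_vol: "omega TYPE('a::euclidean_space) = unit_ball_vol (real DIM('a))"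
  by (simp add: omega_def content_ball)

lemma omega_pos: "omega TYPE('a::euclidean_space) > 0"
  by (simp add: omega_eq_unit_ball_vol)

lemma measure_ball_omega:
  "r \<ge> 0 \<Longrightarrow> measure lborel (ball (c::'a::euclidean_space) r) = omega TYPE('a) * r ^ DIM('a)"
  by (simp add: content_ball omega_eq_unit_ball_vol)

lemma measure_ball_powr:
  "r > 0 \<Longrightarrow> p \<noteq> 0 \<Longrightarrow> measure lborel (ball (c::'a::euclidean_space) r) powr (1/p) =
    omega TYPE('a) powr (1/p) * r powr (real DIM('a) / p)"
  using omega_pos[where 'a='a]
  by (simp add: measure_ball_omega powr_mult powr_realpow[symmetric] powr_powr)

text \<open>The \<open>p\<close>-th power of \<open>Lp_norm\<close>, kept in \<open>ennreal\<close>: \<open>enn2real\<close> would turn an infinite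
  integral into \<open>0\<close>.\<close>

definition Lp_pow :: "real \<Rightarrow> 'a::euclidean_space set \<Rightarrow> ('a \<Rightarrow> real) \<Rightarrow> ennreal" where
  "Lp_pow p S f = (\<integral>\<^sup>+x. indicator S x * ennreal (\<bar>f x\<bar> powr p) \<partial>lborel)"

lemma Lp_norm_eq_Lp_pow: "Lp_norm p S f = enn2real (Lp_pow p S f) powr (1/p)"
  by (simp add: Lp_norm_def Lp_pow_def)

lemma Lp_norm_powr: "p \<noteq> 0 \<Longrightarrow> Lp_norm p S f powr p = enn2real (Lp_pow p S f)"
  by (simp add: Lp_norm_eq_Lp_pow powr_powr)

lemma indicator_times_ennreal_powr:
  "indicator S x * ennreal (\<bar>f x\<bar> powr p) = ennreal ((indicator S x * \<bar>f x\<bar>) powr p)"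
  by (simp add: indicator_def)

lemma borel_measurable_Lp_pow_integrand:
  fixes f :: "'a::euclidean_space \<Rightarrow> real"
  assumes "S \<in> sets borel" "continuous_on S f"
  shows "(\<lambda>x. indicator S x * ennreal (\<bar>f x\<bar> powr p)) \<in> borel_measurable borel"
proof -
  have "(\<lambda>x. indicator S x * \<bar>f x\<bar>) \<in> borel_measurable borel"
    using borel_measurable_continuous_on_indicator[OF assms(1) continuous_on_rabs[OF assms(2)]] by simp
  then show ?thesis
    unfolding indicator_times_ennreal_powr by measurable
qed

lemma Lp_norm_triangle:
  fixes f g h :: "'a::euclidean_space \<Rightarrow> real"
  assumes p: "p \<ge> 1" and S: "S \<in> sets borel"
    and cont: "continuous_on S g" "continuous_on S h"
    and fgh: "\<And>x. x \<in> S \<Longrightarrow> \<bar>f x\<bar> \<le> \<bar>g x\<bar> + \<bar>h x\<bar>"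
    and fin: "Lp_pow p S g < \<infinity>" "Lp_pow p S h < \<infinity>"
  shows "Lp_norm p S f \<le> Lp_norm p S g + Lp_norm p S h"
proof -
  have "(\<lambda>x. indicator S x * \<bar>u x\<bar>) \<in> borel_measurable borel" if "continuous_on S u" for u :: "'a \<Rightarrow> real"
    using borel_measurable_continuous_on_indicator[OF S continuous_on_rabs[OF that]] by simp
  with cont fgh fin p show ?thesis
    unfolding Lp_norm_eq_Lp_pow Lp_pow_def indicator_times_ennreal_powr
    by (intro nn_integral_powr_Minkowski) (auto simp: indicator_def)
qed

lemma Lp_pow_mono_set: "S \<subseteq> T \<Longrightarrow> Lp_pow p S f \<le> Lp_pow p T f"
  unfolding Lp_pow_def by (intro nn_integral_mono) (auto simp: indicator_def)

lemma Lp_norm_mono_set: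
  assumes "S \<subseteq> T" "Lp_pow p T f < \<infinity>" "p > 0"
  shows "Lp_norm p S f \<le> Lp_norm p T f"
  unfolding Lp_norm_eq_Lp_pow using assms Lp_pow_mono_set[OF assms(1)]
  by (intro powr_mono2 enn2real_mono) auto

lemma Lp_pow_mono:
  assumes "p \<ge> 0" "\<And>x. x \<in> S \<Longrightarrow> \<bar>f x\<bar> \<le> \<bar>g x\<bar>"
  shows "Lp_pow p S f \<le> Lp_pow p S g"
  unfolding Lp_pow_def using assms
  by (intro nn_integral_mono) (auto simp: indicator_def intro!: ennreal_leI powr_mono2)

lemma Lp_pow_const:
  "S \<in> sets borel \<Longrightarrow> Lp_pow p S (\<lambda>_. c) = ennreal (\<bar>c\<bar> powr p) * emeasure lborel S"
  unfolding Lp_pow_def by (subst mult.commute) (rule nn_integral_cmult_indicator, simp)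

lemma Lp_norm_const:
  assumes "bounded S" "S \<in> sets borel" "p > 0"
  shows "Lp_norm p S (\<lambda>_. a) = \<bar>a\<bar> * measure lborel S powr (1/p)"
  using assms emeasure_bounded_finite[of S]
  by (simp add: Lp_norm_eq_Lp_pow Lp_pow_const emeasure_eq_ennreal_measure enn2real_mult powr_mult powr_powr)

lemma Lp_pow_bounded_finite:
  assumes "bounded S" "S \<in> sets borel" "p \<ge> 0" "\<And>x. x \<in> S \<Longrightarrow> \<bar>f x\<bar> \<le> M"
  shows "Lp_pow p S f < \<infinity>"
proof -
  have "Lp_pow p S f \<le> Lp_pow p S (\<lambda>_. M)"
    using assms by (intro Lp_pow_mono) force+
  also have "\<dots> < \<infinity>"
    using assms emeasure_bounded_finite[of S] by (simp add: Lp_pow_const ennreal_mult_less_top)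
  finally show ?thesis .
qed

lemma Lp_pow_ball_finite:
  fixes f :: "'a::euclidean_space \<Rightarrow> real"
  assumes "continuous_on (cball c \<rho>) f" "p \<ge> 0"
  shows "Lp_pow p (ball c \<rho>) f < \<infinity>"
proof -
  obtain M where "\<forall>y \<in> f ` cball c \<rho>. norm y \<le> M"
    using compact_imp_bounded[OF compact_continuous_image[OF assms(1) compact_cball]]
    unfolding bounded_iff by blast
  then show ?thesis
    using assms(2) by (intro Lp_pow_bounded_finite[of _ _ _ M]) auto
qed

lemma Lp_norm_le_sup:
  assumes "bounded S" "S \<in> sets borel" "p > 0" "M \<ge> 0" "\<And>x. x \<in> S \<Longrightarrow> \<bar>f x\<bar> \<le> M"
  shows "Lp_norm p S f \<le> M * measure lborel S powr (1/p)"
proof -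
  have "Lp_pow p S f \<le> ennreal (M powr p * measure lborel S)"
    using Lp_pow_mono[of p S f "\<lambda>_. M"] assms emeasure_bounded_finite[of S]
    by (simp add: Lp_pow_const emeasure_eq_ennreal_measure ennreal_mult')
  then have "enn2real (Lp_pow p S f) \<le> M powr p * measure lborel S"
    by (simp add: enn2real_leI)
  then have "Lp_norm p S f \<le> (M powr p * measure lborel S) powr (1/p)"
    unfolding Lp_norm_eq_Lp_pow using assms(3) by (intro powr_mono2) auto
  also have "\<dots> = M * measure lborel S powr (1/p)"
    using assms by (simp add: powr_mult powr_powr)
  finally show ?thesis .
qed

lemma abs_mult_measure_ball_le_Lp_norm:
  fixes f :: "'a::euclidean_space \<Rightarrow> real"
  assumes f: "continuous_on (cball x R) f" and p: "p \<ge> 1"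
  shows "\<bar>f x\<bar> * measure lborel (ball x R) powr (1/p) \<le>
    Lp_norm p (ball x R) f + Lp_norm p (ball x R) (\<lambda>y. f y - f x)"
proof -
  have "\<bar>f x\<bar> * measure lborel (ball x R) powr (1/p) = Lp_norm p (ball x R) (\<lambda>_. f x)"
    using p by (simp add: Lp_norm_const)
  also have "\<dots> \<le> Lp_norm p (ball x R) f + Lp_norm p (ball x R) (\<lambda>y. f y - f x)"
  proof (rule Lp_norm_triangle[OF p])
    show "continuous_on (ball x R) f" "continuous_on (ball x R) (\<lambda>y. f y - f x)"
      using continuous_on_subset[OF f ball_subset_cball] by (auto intro: continuous_on_diff)
    show "Lp_pow p (ball x R) f < \<infinity>" "Lp_pow p (ball x R) (\<lambda>y. f y - f x) < \<infinity>"
      using Lp_pow_ball_finite[OF f] Lp_pow_ball_finite[OF continuous_on_diff[OF f continuous_on_const]] p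
      by auto
  qed auto
  finally show ?thesis .
qed

lemma Lp_pow_pos:
  fixes f :: "'a::euclidean_space \<Rightarrow> real"
  assumes "open S" "continuous_on S f" "y \<in> S" "f y \<noteq> 0" "p \<ge> 0"
  shows "Lp_pow p S f > 0"
proof -
  obtain d where d: "d > 0" "ball y d \<subseteq> S" "\<And>x. x \<in> ball y d \<Longrightarrow> \<bar>f x - f y\<bar> < \<bar>f y\<bar> / 2"
  proof -
    obtain d1 where d1: "d1 > 0" "\<And>x. x \<in> S \<Longrightarrow> dist x y < d1 \<Longrightarrow> dist (f x) (f y) < \<bar>f y\<bar> / 2"
      using assms(2,3,4) unfolding continuous_on_iff by (metis half_gt_zero zero_less_abs_iff)
    obtain d2 where d2: "d2 > 0" "ball y d2 \<subseteq> S"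
      using assms(1,3) openE by blast
    show ?thesis
    proof (rule that[of "min d1 d2"])
      fix x assume "x \<in> ball y (min d1 d2)"
      with d2 have "x \<in> S" "dist x y < d1" by (auto simp: dist_commute)
      with d1 show "\<bar>f x - f y\<bar> < \<bar>f y\<bar> / 2" by (simp add: dist_real_def)
    qed (use d1 d2 in auto)
  qed
  have "0 < ennreal ((\<bar>f y\<bar> / 2) powr p) * emeasure lborel (ball y d)"
    using d assms(4) by (simp add: emeasure_ball flip: ennreal_mult')
  also have "\<dots> = Lp_pow p (ball y d) (\<lambda>_. \<bar>f y\<bar> / 2)"
    by (simp add: Lp_pow_const)
  also have "\<dots> \<le> Lp_pow p (ball y d) f"
  proof (rule Lp_pow_mono)
    fix x assume "x \<in> ball y d"
    then show "\<bar>\<bar>f y\<bar> / 2\<bar> \<le> \<bar>f x\<bar>" using d(3)[of x] by linarith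
  qed (use assms(5) in simp)
  also have "\<dots> \<le> Lp_pow p S f"
    using d(2) by (rule Lp_pow_mono_set)
  finally show ?thesis .
qed

lemma nn_integral_lborel_affine:
  fixes f :: "'a::euclidean_space \<Rightarrow> ennreal" and c :: real
  assumes [measurable]: "f \<in> borel_measurable borel" and c: "c \<noteq> 0"
  shows "(\<integral>\<^sup>+x. f x \<partial>lborel) = ennreal (\<bar>c\<bar> ^ DIM('a)) * (\<integral>\<^sup>+x. f (t + c *\<^sub>R x) \<partial>lborel)"
  by (subst lborel_affine[OF c, of t])
    (simp add: nn_integral_density nn_integral_distr nn_integral_cmult ennreal_power)

lemma Lp_pow_cmult:
  fixes f :: "'a::euclidean_space \<Rightarrow> real"
  assumes "S \<in> sets borel" "continuous_on S f"
  shows "Lp_pow p S (\<lambda>x. k * f x) = ennreal (\<bar>k\<bar> powr p) * Lp_pow p S f"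
proof -
  have "Lp_pow p S (\<lambda>x. k * f x) =
      (\<integral>\<^sup>+x. ennreal (\<bar>k\<bar> powr p) * (indicator S x * ennreal (\<bar>f x\<bar> powr p)) \<partial>lborel)"
    unfolding Lp_pow_def by (intro nn_integral_cong) (simp add: abs_mult powr_mult ennreal_mult' mult_ac)
  also have "\<dots> = ennreal (\<bar>k\<bar> powr p) * Lp_pow p S f"
    unfolding Lp_pow_def using borel_measurable_Lp_pow_integrand[OF assms] by (simp add: nn_integral_cmult)
  finally show ?thesis .
qed

lemma Lp_pow_ball_affine:
  fixes f :: "'a::euclidean_space \<Rightarrow> real"
  assumes "\<rho> > 0" "continuous_on (ball c \<rho>) f"
  shows "Lp_pow p (ball c \<rho>) f = ennreal (\<rho> ^ DIM('a)) * Lp_pow p (ball 0 1) (\<lambda>z. f (c + \<rho> *\<^sub>R z))"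
  unfolding Lp_pow_def
  using nn_integral_lborel_affine[OF borel_measurable_Lp_pow_integrand[OF _ assms(2)], where c = \<rho> and t = c] assms(1)
  by (simp add: indicator_def dist_norm)

lemma Lp_pow_Times:
  fixes f :: "'a::euclidean_space \<Rightarrow> real" and g :: "'b::euclidean_space \<Rightarrow> real"
  assumes A: "A \<in> sets borel" "continuous_on A f" and B: "B \<in> sets borel" "continuous_on B g"
  shows "Lp_pow p (A \<times> B) (\<lambda>z. f (fst z) * g (snd z)) = Lp_pow p A f * Lp_pow p B g"
proof -
  define F G where "F x = indicator A x * ennreal (\<bar>f x\<bar> powr p)" and "G y = indicator B y * ennreal (\<bar>g y\<bar> powr p)"
    for x y
  have [measurable]: "F \<in> borel_measurable borel" "G \<in> borel_measurable borel"
    unfolding F_def G_def using borel_measurable_Lp_pow_integrand[OF A] borel_measurable_Lp_pow_integrand[OF B]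
    by simp_all
  have "Lp_pow p (A \<times> B) (\<lambda>z. f (fst z) * g (snd z)) = (\<integral>\<^sup>+z. F (fst z) * G (snd z) \<partial>(lborel \<Otimes>\<^sub>M lborel))"
    unfolding Lp_pow_def lborel_prod F_def G_def
    by (intro nn_integral_cong) (auto simp: indicator_def abs_mult powr_mult ennreal_mult')
  also have "\<dots> = (\<integral>\<^sup>+x. \<integral>\<^sup>+y. F x * G y \<partial>lborel \<partial>lborel)"
    using lborel.nn_integral_fst[of "\<lambda>z. F (fst z) * G (snd z)"] by simp
  also have "\<dots> = Lp_pow p A f * Lp_pow p B g"
    unfolding Lp_pow_def F_def[abs_def, symmetric] G_def[abs_def, symmetric]
    by (simp add: nn_integral_cmult nn_integral_multc)
  finally show ?thesis .
qed

lemma Lp_norm_Times: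
  fixes f :: "'a::euclidean_space \<Rightarrow> real" and g :: "'b::euclidean_space \<Rightarrow> real"
  assumes "A \<in> sets borel" "continuous_on A f" "B \<in> sets borel" "continuous_on B g"
  shows "Lp_norm p (A \<times> B) (\<lambda>z. f (fst z) * g (snd z)) = Lp_norm p A f * Lp_norm p B g"
  by (simp add: Lp_norm_eq_Lp_pow Lp_pow_Times[OF assms] enn2real_mult powr_mult)

section \<open>The Gagliardo seminorm\<close>

lemma borel_measurable_gagliardo_integrand:
  fixes f :: "'a::euclidean_space \<Rightarrow> real"
  assumes "S \<in> sets borel" "continuous_on S f"
  shows "(\<lambda>z. indicator (S \<times> S) z * ennreal (\<bar>f (fst z) - f (snd z)\<bar> powr p / norm (fst z - snd z) powr q))
    \<in> borel_measurable (lborel \<Otimes>\<^sub>M lborel)"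
proof -
  define g where "g = (\<lambda>x. indicator S x * f x)"
  have [measurable]: "g \<in> borel_measurable borel" "S \<in> sets borel"
    using borel_measurable_continuous_on_indicator[OF assms] assms(1) by (simp_all add: g_def)
  have "(\<lambda>z. indicator (S \<times> S) z * ennreal (\<bar>f (fst z) - f (snd z)\<bar> powr p / norm (fst z - snd z) powr q)) =
      (\<lambda>z. indicator (S \<times> S) z * ennreal (\<bar>g (fst z) - g (snd z)\<bar> powr p / norm (fst z - snd z) powr q))"
    by (auto simp: g_def indicator_def fun_eq_iff)
  also have "\<dots> \<in> borel_measurable (lborel \<Otimes>\<^sub>M lborel)" by measurable
  finally show ?thesis .
qed

lemma gagliardo_pow_mono_set: "S \<subseteq> T \<Longrightarrow> gagliardo_pow s p S f \<le> gagliardo_pow s p T f"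
  unfolding gagliardo_pow_def by (intro nn_integral_mono) (auto simp: indicator_def)

lemma gagliardo_pow_diff_const: "gagliardo_pow s p S (\<lambda>y. f y - a) = gagliardo_pow s p S f"
  by (simp add: gagliardo_pow_def)

lemma gagliardo_powr: "p \<noteq> 0 \<Longrightarrow> gagliardo s p S f powr p = enn2real (gagliardo_pow s p S f)"
  by (simp add: gagliardo_def powr_powr)

lemma gagliardo_mono_set:
  assumes "S \<subseteq> T" "gagliardo_pow s p T f < \<infinity>" "p > 0"
  shows "gagliardo s p S f \<le> gagliardo s p T f"
  unfolding gagliardo_def using assms gagliardo_pow_mono_set[OF assms(1)]
  by (intro powr_mono2 enn2real_mono) auto

lemma gagliardo_pow_cmult:
  fixes f :: "'a::euclidean_space \<Rightarrow> real"
  assumes "S \<in> sets borel" "continuous_on S f"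
  shows "gagliardo_pow s p S (\<lambda>x. k * f x) = ennreal (\<bar>k\<bar> powr p) * gagliardo_pow s p S f"
proof -
  have "gagliardo_pow s p S (\<lambda>x. k * f x) =
      (\<integral>\<^sup>+z. ennreal (\<bar>k\<bar> powr p) * (indicator (S \<times> S) z * ennreal (\<bar>f (fst z) - f (snd z)\<bar> powr p /
         norm (fst z - snd z) powr (real DIM('a) + s * p))) \<partial>(lborel \<Otimes>\<^sub>M lborel))"
    unfolding gagliardo_pow_def
  proof (intro nn_integral_cong)
    have e: "\<bar>k * a - k * b\<bar> powr p / Y = \<bar>k\<bar> powr p * (\<bar>a - b\<bar> powr p / Y)" for a b Y :: real
      by (simp add: right_diff_distrib[symmetric] abs_mult powr_mult)
    show "indicator (S \<times> S) z * ennreal (\<bar>k * f (fst z) - k * f (snd z)\<bar> powr p /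
        norm (fst z - snd z) powr (real DIM('a) + s * p)) =
      ennreal (\<bar>k\<bar> powr p) * (indicator (S \<times> S) z * ennreal (\<bar>f (fst z) - f (snd z)\<bar> powr p /
        norm (fst z - snd z) powr (real DIM('a) + s * p)))" for z :: "'a \<times> 'a"
      unfolding e by (simp only: ennreal_mult'[OF powr_ge_zero] mult_ac)
  qed
  also have "\<dots> = ennreal (\<bar>k\<bar> powr p) * gagliardo_pow s p S f"
    unfolding gagliardo_pow_def using borel_measurable_gagliardo_integrand[OF assms]
    by (simp add: nn_integral_cmult)
  finally show ?thesis .
qed

lemma gagliardo_pow_ball_affine:
  fixes f :: "'a::euclidean_space \<Rightarrow> real"
  assumes \<rho>: "\<rho> > 0" and f: "continuous_on (ball c \<rho>) f"
  shows "gagliardo_pow s p (ball c \<rho>) f =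
    ennreal (\<rho> powr (real DIM('a) - s * p)) * gagliardo_pow s p (ball 0 1) (\<lambda>z. f (c + \<rho> *\<^sub>R z))"
proof -
  let ?q = "real DIM('a) + s * p"
  let ?F = "\<lambda>S g z. indicator (S \<times> S) z *
    ennreal (\<bar>g (fst z) - g (snd z)\<bar> powr p / norm (fst z - snd z) powr ?q)"
  have f1: "continuous_on (ball 0 1) (\<lambda>z. f (c + \<rho> *\<^sub>R z))"
    using \<rho> by (intro continuous_on_compose2[OF f] continuous_intros) (auto simp: dist_norm)
  have pw: "?F (ball c \<rho>) f ((c, c) + \<rho> *\<^sub>R z) = ennreal (\<rho> powr (- ?q)) * ?F (ball 0 1) (\<lambda>z. f (c + \<rho> *\<^sub>R z)) z"
    for z :: "'a \<times> 'a"
  proof -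
    obtain x y where z: "z = (x, y)" by (cases z)
    have ind: "indicator (ball c \<rho> \<times> ball c \<rho>) ((c, c) + \<rho> *\<^sub>R z) = (indicator (ball 0 1 \<times> ball 0 1) z :: ennreal)"
      using \<rho> by (simp add: z indicator_def dist_norm)
    have nrm: "norm (c + \<rho> *\<^sub>R x - (c + \<rho> *\<^sub>R y)) powr ?q = \<rho> powr ?q * norm (x - y) powr ?q"
      using \<rho> by (simp add: scaleR_diff_right[symmetric] powr_mult)
    have "D / norm (c + \<rho> *\<^sub>R x - (c + \<rho> *\<^sub>R y)) powr ?q = \<rho> powr (- ?q) * (D / norm (x - y) powr ?q)"
      for D :: real
      unfolding nrm by (simp only: powr_minus divide_inverse inverse_mult_distrib mult_ac)
    then show ?thesis
      unfolding ind unfolding z fst_add snd_add fst_scaleR snd_scaleR fst_conv snd_conv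
      by (simp only: ennreal_mult'[OF powr_ge_zero] mult_ac)
  qed
  have m: "?F (ball c \<rho>) f \<in> borel_measurable borel" and m1: "?F (ball 0 1) (\<lambda>z. f (c + \<rho> *\<^sub>R z)) \<in> borel_measurable borel"
    using borel_measurable_gagliardo_integrand[OF _ f] borel_measurable_gagliardo_integrand[OF _ f1]
    by (simp_all add: lborel_prod)
  have "gagliardo_pow s p (ball c \<rho>) f = ennreal (\<bar>\<rho>\<bar> ^ DIM('a \<times> 'a)) *
      (\<integral>\<^sup>+z. ?F (ball c \<rho>) f ((c, c) + \<rho> *\<^sub>R z) \<partial>lborel)"
    unfolding gagliardo_pow_def lborel_prod
    by (rule nn_integral_lborel_affine[OF m]) (use \<rho> in simp)
  also have "\<dots> = ennreal (\<rho> ^ DIM('a \<times> 'a)) *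
      (\<integral>\<^sup>+z. ennreal (\<rho> powr (- ?q)) * ?F (ball 0 1) (\<lambda>z. f (c + \<rho> *\<^sub>R z)) z \<partial>lborel)"
    using \<rho> by (simp only: pw abs_of_pos)
  also have "\<dots> = ennreal (\<rho> ^ DIM('a \<times> 'a) * \<rho> powr (- ?q)) * gagliardo_pow s p (ball 0 1) (\<lambda>z. f (c + \<rho> *\<^sub>R z))"
    unfolding gagliardo_pow_def lborel_prod
    using m1 \<rho> by (simp add: nn_integral_cmult ennreal_mult' mult.assoc)
  also have "\<rho> ^ DIM('a \<times> 'a) * \<rho> powr (- ?q) = \<rho> powr (real DIM('a) - s * p)"
    using \<rho> by (simp add: powr_realpow[symmetric] powr_add[symmetric])
  finally show ?thesis .
qed

lemma Lp_pow_Times_diff_le_gagliardo_pow: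
  fixes f :: "'a::euclidean_space \<Rightarrow> real"
  assumes S: "S \<in> sets borel" "continuous_on S f" and AB: "A \<subseteq> S" "B \<subseteq> S"
    and d: "\<And>x y. x \<in> A \<Longrightarrow> y \<in> B \<Longrightarrow> dist x y \<le> d" and sp: "s \<ge> 0" "p > 0"
  shows "Lp_pow p (A \<times> B) (\<lambda>z. f (fst z) - f (snd z)) \<le>
    ennreal (d powr (real DIM('a) + s * p)) * gagliardo_pow s p S f"
proof -
  let ?q = "real DIM('a) + s * p"
  have "Lp_pow p (A \<times> B) (\<lambda>z. f (fst z) - f (snd z)) \<le>
      (\<integral>\<^sup>+z. ennreal (d powr ?q) * (indicator (S \<times> S) z *
        ennreal (\<bar>f (fst z) - f (snd z)\<bar> powr p / norm (fst z - snd z) powr ?q)) \<partial>(lborel \<Otimes>\<^sub>M lborel))"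
    unfolding Lp_pow_def lborel_prod
  proof (rule nn_integral_mono)
    fix z :: "'a \<times> 'a"
    obtain x y where z: "z = (x, y)" by (cases z)
    show "indicator (A \<times> B) z * ennreal (\<bar>f (fst z) - f (snd z)\<bar> powr p) \<le>
      ennreal (d powr ?q) * (indicator (S \<times> S) z *
        ennreal (\<bar>f (fst z) - f (snd z)\<bar> powr p / norm (fst z - snd z) powr ?q))"
    proof (cases "x \<in> A \<and> y \<in> B \<and> x \<noteq> y")
      case True
      then have "norm (x - y) > 0" "norm (x - y) \<le> d" using d[of x y] by (auto simp: dist_norm)
      then have "\<bar>f x - f y\<bar> powr p = norm (x - y) powr ?q * (\<bar>f x - f y\<bar> powr p / norm (x - y) powr ?q)"
        by simp
      also have "\<dots> \<le> d powr ?q * (\<bar>f x - f y\<bar> powr p / norm (x - y) powr ?q)"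
        using \<open>norm (x - y) \<le> d\<close> sp by (intro mult_right_mono powr_mono2) auto
      finally have "\<bar>f x - f y\<bar> powr p \<le> d powr ?q * (\<bar>f x - f y\<bar> powr p / norm (x - y) powr ?q)" .
      then show ?thesis
        using True AB by (auto simp: z indicator_def ennreal_mult'[symmetric] intro!: ennreal_leI)
    qed (auto simp: z indicator_def)
  qed
  also have "\<dots> = ennreal (d powr ?q) * gagliardo_pow s p S f"
    unfolding gagliardo_pow_def using borel_measurable_gagliardo_integrand[OF S]
    by (simp add: nn_integral_cmult)
  finally show ?thesis .
qed

lemma Lp_norm_Times_diff_le_gagliardo:
  fixes f :: "'a::euclidean_space \<Rightarrow> real"
  assumes S: "S \<in> sets borel" "continuous_on S f" and AB: "A \<subseteq> S" "B \<subseteq> S"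
    and d: "\<And>x y. x \<in> A \<Longrightarrow> y \<in> B \<Longrightarrow> dist x y \<le> d" "d \<ge> 0"
    and sp: "s \<ge> 0" "p > 0" and fin: "gagliardo_pow s p S f < \<infinity>"
  shows "Lp_norm p (A \<times> B) (\<lambda>z. f (fst z) - f (snd z)) \<le>
    d powr ((real DIM('a) + s * p) / p) * gagliardo s p S f"
proof -
  let ?q = "real DIM('a) + s * p"
  have "enn2real (Lp_pow p (A \<times> B) (\<lambda>z. f (fst z) - f (snd z))) \<le> d powr ?q * enn2real (gagliardo_pow s p S f)"
    using enn2real_mono[OF Lp_pow_Times_diff_le_gagliardo_pow[OF S AB d(1) sp]] fin
    by (simp add: enn2real_mult ennreal_mult_less_top)
  then have "Lp_norm p (A \<times> B) (\<lambda>z. f (fst z) - f (snd z)) \<le> (d powr ?q * enn2real (gagliardo_pow s p S f)) powr (1/p)"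
    unfolding Lp_norm_eq_Lp_pow using sp by (intro powr_mono2) auto
  also have "\<dots> = d powr (?q / p) * gagliardo s p S f"
    using d(2) by (simp add: gagliardo_def powr_mult powr_powr)
  finally show ?thesis .
qed

section \<open>\<open>C\<^sup>1\<close> functions on balls\<close>

lemma C1_closure_subset:
  assumes "S \<subseteq> T" "C1_closure T f"
  shows "C1_closure S f"
  using assms closure_mono[OF assms(1)] unfolding C1_closure_def by (blast intro: continuous_on_subset)

lemma C1_closure_diff_const: "C1_closure S f \<Longrightarrow> C1_closure S (\<lambda>y. f y - a)"
  unfolding C1_closure_def by (auto intro!: continuous_on_diff derivative_eq_intros)

lemma C1_closure_ball_affine:
  fixes f :: "'a::euclidean_space \<Rightarrow> real"
  assumes f: "C1_closure (ball c \<rho>) f" and \<rho>: "\<rho> > 0"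
  shows "C1_closure (ball 0 1) (\<lambda>z. k * f (c + \<rho> *\<^sub>R z))"
proof -
  from f \<rho> obtain D where cont: "continuous_on (cball c \<rho>) f"
    and der: "\<And>x. x \<in> ball c \<rho> \<Longrightarrow> (f has_derivative blinfun_apply (D x)) (at x)"
    and D: "continuous_on (cball c \<rho>) D"
    unfolding C1_closure_def closure_ball[OF \<rho>] by blast
  have maps: "c + \<rho> *\<^sub>R z \<in> cball c \<rho>" if "z \<in> cball 0 1" for z
    using that \<rho> by (simp add: dist_norm)
  have "((\<lambda>z. k * f (c + \<rho> *\<^sub>R z)) has_derivative blinfun_apply ((k * \<rho>) *\<^sub>R D (c + \<rho> *\<^sub>R z))) (at z)"
    if "z \<in> ball 0 1" for z
  proof -
    have "c + \<rho> *\<^sub>R z \<in> ball c \<rho>" using that \<rho> by (simp add: dist_norm)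
    have "((\<lambda>z. c + \<rho> *\<^sub>R z) has_derivative (\<lambda>h. \<rho> *\<^sub>R h)) (at z)"
      by (auto intro!: derivative_eq_intros)
    from diff_chain_at[OF this der[OF \<open>c + \<rho> *\<^sub>R z \<in> ball c \<rho>\<close>]]
    have "((\<lambda>z. f (c + \<rho> *\<^sub>R z)) has_derivative (\<lambda>h. D (c + \<rho> *\<^sub>R z) (\<rho> *\<^sub>R h))) (at z)"
      by (simp add: o_def)
    moreover have "blinfun_apply ((k * \<rho>) *\<^sub>R D (c + \<rho> *\<^sub>R z)) = (\<lambda>h. k * D (c + \<rho> *\<^sub>R z) (\<rho> *\<^sub>R h))"
      by (rule ext) (simp add: blinfun.scaleR_left blinfun.scaleR_right)
    ultimately show ?thesis
      using has_derivative_mult_right by metis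
  qed
  moreover have "continuous_on (cball 0 1) (\<lambda>z. k * f (c + \<rho> *\<^sub>R z))"
    by (intro continuous_intros continuous_on_compose2[OF cont]) (auto intro: maps)
  moreover have "continuous_on (cball 0 1) (\<lambda>z. (k * \<rho>) *\<^sub>R D (c + \<rho> *\<^sub>R z))"
    by (intro continuous_intros continuous_on_compose2[OF D]) (auto intro: maps)
  ultimately show ?thesis
    unfolding C1_closure_def closure_ball[OF zero_less_one]
    by (intro conjI exI[of _ "\<lambda>z. (k * \<rho>) *\<^sub>R D (c + \<rho> *\<^sub>R z)"]) auto
qed

lemma C1_closure_ball_lipschitz:
  fixes f :: "'a::euclidean_space \<Rightarrow> real"
  assumes f: "C1_closure (ball c \<rho>) f" and \<rho>: "\<rho> > 0"
  obtains M where "M \<ge> 0" "\<And>x y. x \<in> ball c \<rho> \<Longrightarrow> y \<in> ball c \<rho> \<Longrightarrow> \<bar>f x - f y\<bar> \<le> M * norm (x - y)"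
proof -
  from f \<rho> obtain D where der: "\<And>x. x \<in> ball c \<rho> \<Longrightarrow> (f has_derivative blinfun_apply (D x)) (at x)"
    and D: "continuous_on (cball c \<rho>) D"
    unfolding C1_closure_def closure_ball[OF \<rho>] by blast
  obtain B where B: "\<forall>y \<in> D ` cball c \<rho>. norm y \<le> B"
    using compact_imp_bounded[OF compact_continuous_image[OF D compact_cball]]
    unfolding bounded_iff by blast
  have "norm (f x - f y) \<le> max B 0 * norm (x - y)" if "x \<in> ball c \<rho>" "y \<in> ball c \<rho>" for x y
  proof (rule differentiable_bound[OF convex_ball])
    fix z assume z: "z \<in> ball c \<rho>"
    then show "(f has_derivative blinfun_apply (D z)) (at z within ball c \<rho>)"
      using der has_derivative_at_withinI by blast
    have "norm (D z) \<le> B"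
      using B z by auto
    then show "onorm (blinfun_apply (D z)) \<le> max B 0"
      by (simp add: norm_blinfun.rep_eq[symmetric])
  qed (use that in auto)
  then show ?thesis
    by (intro that[of "max B 0"]) auto
qed

section \<open>Finiteness of the Gagliardo seminorm of \<open>C\<^sup>1\<close> functions\<close>

lemma exists_dyadic_shell:
  fixes x T :: real
  assumes "0 < x" "x < T"
  shows "\<exists>k. T / 2 ^ Suc k < x \<and> x \<le> T / 2 ^ k"
proof -
  define L where "L = log 2 (T / x)"
  have L: "L > 0" "2 powr L = T / x"
    using assms by (simp_all add: L_def)
  define k where "k = nat \<lfloor>L\<rfloor>"
  have "real k \<le> L" "L < real (Suc k)"
    using L real_of_int_floor_add_one_gt[of L] by (simp_all add: k_def) linarith
  then have "2 powr real k \<le> T / x" "T / x < 2 powr real (Suc k)"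
    unfolding L(2)[symmetric] by (simp_all del: of_nat_Suc)
  with assms have "x \<le> T / 2 ^ k" "T / 2 ^ Suc k < x"
    by (simp_all only: powr_realpow) (simp_all add: field_simps)
  then show ?thesis by blast
qed

lemma powr_power_swap: "b > 0 \<Longrightarrow> (b ^ n) powr x = (b powr x) ^ n" for b x :: real
  by (simp add: powr_realpow[symmetric] powr_powr mult.commute)

lemma summable_dyadic_shell_weights:
  fixes \<alpha> T :: real
  assumes \<alpha>: "\<alpha> < real n" and T: "T > 0"
  shows "summable (\<lambda>k. (T / 2 ^ Suc k) powr (- \<alpha>) * (T / 2 ^ k) ^ n)"
proof -
  define q where "q = 2 powr \<alpha> / 2 ^ n"
  have "2 powr \<alpha> < 2 powr real n"
    using \<alpha> by simp
  then have q: "norm q < 1"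
    by (simp add: q_def powr_realpow)
  have "(T / 2 ^ Suc k) powr (- \<alpha>) * (T / 2 ^ k) ^ n = (T powr (- \<alpha>) * 2 powr \<alpha> * T ^ n) * q ^ k"
    for k
  proof -
    have "(T / 2 ^ Suc k) powr (- \<alpha>) = T powr (- \<alpha>) * 2 powr \<alpha> * (2 powr \<alpha>) ^ k"
      using T by (simp add: powr_divide powr_minus_divide powr_power_swap del: power_Suc) simp
    then show ?thesis
      unfolding q_def power_divide by (simp add: power_mult[symmetric] mult.commute)
  qed
  then show ?thesis
    by (simp only: summable_mult summable_geometric q)
qed

lemma indicator_norm_powr_le_dyadic_sum:
  fixes u :: "'a::real_normed_vector"
  assumes T: "T > 0" and \<alpha>: "\<alpha> > 0"
  shows "indicator (ball 0 T) u * ennreal (norm u powr (- \<alpha>)) \<le>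
    (\<Sum>k. ennreal ((T / 2 ^ Suc k) powr (- \<alpha>)) * indicator (cball 0 (T / 2 ^ k)) u)"
proof (cases "u \<in> ball 0 T \<and> u \<noteq> 0")
  case True
  then obtain k where k: "T / 2 ^ Suc k < norm u" "norm u \<le> T / 2 ^ k"
    using exists_dyadic_shell[of "norm u" T] by auto
  define F where "F = (\<lambda>k. ennreal ((T / 2 ^ Suc k) powr (- \<alpha>)) * indicator (cball (0::'a) (T / 2 ^ k)) u)"
  have "norm u powr (- \<alpha>) \<le> (T / 2 ^ Suc k) powr (- \<alpha>)"
    using k \<alpha> T by (intro powr_mono2') auto
  then have "indicator (ball 0 T) u * ennreal (norm u powr (- \<alpha>)) \<le> F k"
    using True k by (simp add: F_def ennreal_leI)
  also have "F k \<le> suminf F"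
    using sum_le_suminf[of F "{k}"] by simp
  finally show ?thesis
    by (simp only: F_def)
qed (auto simp: indicator_def)

lemma nn_integral_ball_norm_powr_finite:
  fixes \<alpha> T :: real
  assumes T: "T > 0" and \<alpha>: "\<alpha> < real DIM('a)"
  shows "(\<integral>\<^sup>+u. indicator (ball (0::'a::euclidean_space) T) u * ennreal (norm u powr (- \<alpha>)) \<partial>lborel) < \<infinity>"
proof (cases "\<alpha> \<le> 0")
  case True
  have "(\<integral>\<^sup>+u. indicator (ball (0::'a) T) u * ennreal (norm u powr (- \<alpha>)) \<partial>lborel) \<le>
      (\<integral>\<^sup>+u. ennreal (T powr (- \<alpha>)) * indicator (ball (0::'a) T) u \<partial>lborel)"
    using True by (intro nn_integral_mono) (auto simp: indicator_def intro!: ennreal_leI powr_mono2)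
  also have "\<dots> < \<infinity>"
    using emeasure_lborel_ball_finite[of "0::'a" T]
    by (simp add: nn_integral_cmult_indicator ennreal_mult_less_top)
  finally show ?thesis .
next
  case False
  define r c where "r k = T / 2 ^ k" and "c k = (T / 2 ^ Suc k) powr (- \<alpha>)" for k :: nat
  define V where "V = unit_ball_vol (real DIM('a))"
  have r: "r k > 0" for k
    using T by (simp add: r_def)
  have "\<alpha> > 0"
    using False by simp
  have "(\<integral>\<^sup>+u. indicator (ball (0::'a) T) u * ennreal (norm u powr (- \<alpha>)) \<partial>lborel) \<le>
      (\<integral>\<^sup>+u. (\<Sum>k. ennreal (c k) * indicator (cball (0::'a) (r k)) u) \<partial>lborel)"
    using indicator_norm_powr_le_dyadic_sum[OF T \<open>\<alpha> > 0\<close>] by (intro nn_integral_mono) (simp add: r_def c_def)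
  also have "\<dots> = (\<Sum>k. \<integral>\<^sup>+u. ennreal (c k) * indicator (cball (0::'a) (r k)) u \<partial>lborel)"
    by (intro nn_integral_suminf borel_measurable_times_ennreal borel_measurable_const
        borel_measurable_indicator) simp
  also have "\<dots> = (\<Sum>k. ennreal (c k * (V * r k ^ DIM('a))))"
    using less_imp_le[OF r]
    by (simp add: nn_integral_cmult_indicator emeasure_cball V_def ennreal_mult' c_def)
  also have "\<dots> = ennreal (\<Sum>k. c k * (V * r k ^ DIM('a)))"
  proof (rule suminf_ennreal2)
    show "0 \<le> c k * (V * r k ^ DIM('a))" for k
      using r by (simp add: c_def V_def less_imp_le)
    show "summable (\<lambda>k. c k * (V * r k ^ DIM('a)))"
      using summable_mult[OF summable_dyadic_shell_weights[OF \<alpha> T], of V]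
      by (simp add: c_def r_def mult_ac)
  qed
  finally show ?thesis
    by (simp add: order_le_less_trans)
qed

lemma nn_integral_ball_pair_norm_powr_finite:
  fixes c :: "'a::euclidean_space"
  assumes \<alpha>: "\<alpha> < real DIM('a)" and \<rho>: "\<rho> > 0"
  shows "(\<integral>\<^sup>+z. indicator (ball c \<rho> \<times> ball c \<rho>) z * ennreal (norm (fst z - snd z) powr (- \<alpha>))
    \<partial>(lborel \<Otimes>\<^sub>M lborel)) < \<infinity>"
proof -
  let ?B = "ball c \<rho>"
  define g where "g = (\<lambda>z::'a \<times> 'a. indicator (?B \<times> ?B) z * ennreal (norm (fst z - snd z) powr (- \<alpha>)))"
  define K where "K = (\<lambda>u. indicator (ball (0::'a) (2 * \<rho>)) u * ennreal (norm u powr (- \<alpha>)))"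
  have [measurable]: "ball (0::'a) (2 * \<rho>) \<in> sets borel"
    by simp
  have [measurable]: "g \<in> borel_measurable (lborel \<Otimes>\<^sub>M lborel)" "K \<in> borel_measurable borel"
    unfolding g_def K_def by measurable
  have K: "integral\<^sup>N lborel K < \<infinity>"
    unfolding K_def using \<rho> \<alpha> by (intro nn_integral_ball_norm_powr_finite) auto
  have "(\<integral>\<^sup>+y. g (x, y) \<partial>lborel) \<le> integral\<^sup>N lborel K * indicator ?B x" for x
  proof -
    have "(\<integral>\<^sup>+y. g (x, y) \<partial>lborel) = (\<integral>\<^sup>+u. g (x, x + u) \<partial>lborel)"
      using nn_integral_lborel_affine[of "\<lambda>y. g (x, y)" 1 x] by simp
    also have "\<dots> \<le> (\<integral>\<^sup>+u. indicator ?B x * K u \<partial>lborel)"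
    proof (rule nn_integral_mono)
      fix u :: 'a
      have "norm u < 2 * \<rho>" if "x \<in> ?B" "x + u \<in> ?B"
        using that dist_triangle_less_add[of x c \<rho> "x + u" \<rho>] by (simp add: dist_norm norm_minus_commute)
      then show "g (x, x + u) \<le> indicator ?B x * K u"
        by (auto simp: g_def K_def indicator_def)
    qed
    also have "\<dots> = indicator ?B x * integral\<^sup>N lborel K"
      by (rule nn_integral_cmult) simp
    finally show ?thesis
      by (simp add: mult.commute)
  qed
  then have "integral\<^sup>N (lborel \<Otimes>\<^sub>M lborel) g \<le> (\<integral>\<^sup>+x. integral\<^sup>N lborel K * indicator ?B x \<partial>lborel)"
    unfolding lborel.nn_integral_fst[symmetric, OF \<open>g \<in> borel_measurable (lborel \<Otimes>\<^sub>M lborel)\<close>]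
    by (intro nn_integral_mono)
  also have "\<dots> < \<infinity>"
    using K emeasure_lborel_ball_finite[of c \<rho>] by (simp add: nn_integral_cmult_indicator ennreal_mult_less_top)
  finally show ?thesis
    by (simp add: g_def)
qed

text \<open>A \<open>C\<^sup>1\<close> function is Lipschitz, so the Gagliardo integrand is dominated by
  \<open>M\<^sup>p |x - y| powr -\<alpha>\<close> with \<open>\<alpha> = N - (1 - s) p < N\<close>.\<close>

lemma gagliardo_pow_finite:
  fixes f :: "'a::euclidean_space \<Rightarrow> real"
  assumes f: "C1_closure (ball c \<rho>) f" and \<rho>: "\<rho> > 0" and s: "s < 1" and p: "p > 0"
  shows "gagliardo_pow s p (ball c \<rho>) f < \<infinity>"
proof -
  let ?B = "ball c \<rho>"
  define \<alpha> where "\<alpha> = real DIM('a) + s * p - p"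
  define g where "g = (\<lambda>z::'a \<times> 'a. indicator (?B \<times> ?B) z * ennreal (norm (fst z - snd z) powr (- \<alpha>)))"
  have \<alpha>: "\<alpha> < real DIM('a)"
    using s p by (simp add: \<alpha>_def)
  obtain M where M: "M \<ge> 0" "\<And>x y. x \<in> ?B \<Longrightarrow> y \<in> ?B \<Longrightarrow> \<bar>f x - f y\<bar> \<le> M * norm (x - y)"
    using C1_closure_ball_lipschitz[OF f \<rho>] by blast
  have "gagliardo_pow s p ?B f \<le> (\<integral>\<^sup>+z. ennreal (M powr p) * g z \<partial>(lborel \<Otimes>\<^sub>M lborel))"
    unfolding gagliardo_pow_def
  proof (rule nn_integral_mono)
    fix z :: "'a \<times> 'a"
    obtain x y where z: "z = (x, y)" by (cases z)
    show "indicator (?B \<times> ?B) z * ennreal (\<bar>f (fst z) - f (snd z)\<bar> powr p /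
        norm (fst z - snd z) powr (real DIM('a) + s * p)) \<le> ennreal (M powr p) * g z"
    proof (cases "x \<in> ?B \<and> y \<in> ?B \<and> x \<noteq> y")
      case True
      then have "\<bar>f x - f y\<bar> powr p \<le> (M * norm (x - y)) powr p"
        using M(2)[of x y] p by (intro powr_mono2) auto
      also have "\<dots> = M powr p * norm (x - y) powr p"
        using M True by (simp add: powr_mult)
      finally have "\<bar>f x - f y\<bar> powr p / norm (x - y) powr (real DIM('a) + s * p) \<le>
          M powr p * norm (x - y) powr (- \<alpha>)"
        using True by (simp add: \<alpha>_def powr_diff divide_right_mono)
      then show ?thesis
        using True by (simp add: z g_def ennreal_mult'[symmetric] ennreal_leI)
    qed (auto simp: z g_def indicator_def)
  qed
  also have "\<dots> = ennreal (M powr p) * integral\<^sup>N (lborel \<Otimes>\<^sub>M lborel) g"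
    by (rule nn_integral_cmult) (simp add: g_def)
  also have "\<dots> < \<infinity>"
    using nn_integral_ball_pair_norm_powr_finite[OF \<alpha> \<rho>, of c] by (simp add: g_def ennreal_mult_less_top)
  finally show ?thesis .
qed

section \<open>A Morrey-type estimate\<close>

text \<open>Minkowski's inequality on \<open>ball c \<rho> \<times> ball c \<rho>'\<close> for \<open>\<eta> y = \<eta> z + (\<eta> y - \<eta> z)\<close>.\<close>

lemma Lp_norm_ball_le_smaller_ball:
  fixes \<eta> :: "'a::euclidean_space \<Rightarrow> real"
  assumes \<eta>: "C1_closure (ball c \<rho>) \<eta>" and \<rho>: "0 < \<rho>'" "\<rho>' \<le> \<rho>" and p: "p \<ge> 1" and s: "0 \<le> s" "s < 1"
  shows "measure lborel (ball c \<rho>') powr (1/p) * Lp_norm p (ball c \<rho>) \<eta> \<le>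
    measure lborel (ball c \<rho>) powr (1/p) * Lp_norm p (ball c \<rho>') \<eta> +
    (2 * \<rho>) powr ((real DIM('a) + s * p) / p) * gagliardo s p (ball c \<rho>) \<eta>"
proof -
  let ?B = "ball c \<rho>" and ?B' = "ball c \<rho>'"
  have sub: "?B' \<subseteq> ?B"
    using \<rho> by auto
  have cball: "continuous_on (cball c \<rho>) \<eta>"
    using \<eta> \<rho> by (simp add: C1_closure_def)
  then have cont: "continuous_on ?B \<eta>"
    by (rule continuous_on_subset) auto
  then have cont': "continuous_on ?B' \<eta>"
    using sub by (rule continuous_on_subset)
  obtain M where M: "\<forall>y \<in> \<eta> ` cball c \<rho>. norm y \<le> M"
    using compact_imp_bounded[OF compact_continuous_image[OF cball compact_cball]]
    unfolding bounded_iff by blast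
  have P: "?B \<times> ?B' \<in> sets borel" "bounded (?B \<times> ?B')"
    by (auto intro: borel_open open_Times bounded_Times)
  have tri: "Lp_norm p (?B \<times> ?B') (\<lambda>z. \<eta> (fst z) * 1) \<le>
      Lp_norm p (?B \<times> ?B') (\<lambda>z. 1 * \<eta> (snd z)) + Lp_norm p (?B \<times> ?B') (\<lambda>z. \<eta> (fst z) - \<eta> (snd z))"
  proof (rule Lp_norm_triangle[OF p P(1)])
    have "continuous_on (?B \<times> ?B') (\<lambda>z. \<eta> (fst z))"
      by (rule continuous_on_compose2[OF cont continuous_on_fst]) auto
    moreover have "continuous_on (?B \<times> ?B') (\<lambda>z. \<eta> (snd z))"
      by (rule continuous_on_compose2[OF cont' continuous_on_snd]) auto
    ultimately show "continuous_on (?B \<times> ?B') (\<lambda>z. 1 * \<eta> (snd z))"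
      "continuous_on (?B \<times> ?B') (\<lambda>z. \<eta> (fst z) - \<eta> (snd z))"
      by (auto intro: continuous_on_diff)
    have bound: "\<bar>\<eta> (fst z)\<bar> \<le> M" "\<bar>\<eta> (snd z)\<bar> \<le> M" if "z \<in> ?B \<times> ?B'" for z
      using that sub M by auto
    show "Lp_pow p (?B \<times> ?B') (\<lambda>z. 1 * \<eta> (snd z)) < \<infinity>"
      using P p bound by (intro Lp_pow_bounded_finite[where M = M]) auto
    have "\<bar>\<eta> (fst z) - \<eta> (snd z)\<bar> \<le> 2 * M" if "z \<in> ?B \<times> ?B'" for z
      using bound[OF that] by arith
    then show "Lp_pow p (?B \<times> ?B') (\<lambda>z. \<eta> (fst z) - \<eta> (snd z)) < \<infinity>"
      using P p by (intro Lp_pow_bounded_finite[where M = "2 * M"]) auto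
  qed auto
  moreover have "Lp_norm p (?B \<times> ?B') (\<lambda>z. \<eta> (fst z) - \<eta> (snd z)) \<le>
      (2 * \<rho>) powr ((real DIM('a) + s * p) / p) * gagliardo s p ?B \<eta>"
  proof (rule Lp_norm_Times_diff_le_gagliardo[OF _ cont order_refl sub])
    show "dist x y \<le> 2 * \<rho>" if "x \<in> ?B" "y \<in> ?B'" for x y
      using that sub dist_triangle_less_add[of x c \<rho> y \<rho>] by (auto simp: dist_commute)
  qed (use s p \<rho> gagliardo_pow_finite[OF \<eta>] in auto)
  moreover have "Lp_norm p (?B \<times> ?B') (\<lambda>z. \<eta> (fst z) * 1) = Lp_norm p ?B \<eta> * measure lborel ?B' powr (1/p)"
    using p by (subst Lp_norm_Times[OF _ cont _ continuous_on_const]) (auto simp: Lp_norm_const)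
  moreover have "Lp_norm p (?B \<times> ?B') (\<lambda>z. 1 * \<eta> (snd z)) = measure lborel ?B powr (1/p) * Lp_norm p ?B' \<eta>"
    using p by (subst Lp_norm_Times[OF _ continuous_on_const _ cont']) (auto simp: Lp_norm_const)
  ultimately show ?thesis
    by (simp add: mult.commute)
qed

lemma Lp_norm_ball_halving:
  fixes \<eta> :: "'a::euclidean_space \<Rightarrow> real"
  assumes \<eta>: "C1_closure (ball c \<rho>) \<eta>" and \<rho>: "\<rho> > 0" and p: "p \<ge> 1" and s: "0 \<le> s" "s < 1"
  shows "Lp_norm p (ball c \<rho>) \<eta> / \<rho> powr (real DIM('a) / p) \<le>
    Lp_norm p (ball c (\<rho> / 2)) \<eta> / (\<rho> / 2) powr (real DIM('a) / p) +
    (2 powr (2 * real DIM('a) + s * p) / omega TYPE('a)) powr (1/p) *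
      \<rho> powr ((s * p - real DIM('a)) / p) * gagliardo s p (ball c \<rho>) \<eta>"
proof -
  let ?N = "real DIM('a)" and ?\<omega> = "omega TYPE('a)"
  let ?a = "Lp_norm p (ball c \<rho>) \<eta>" and ?b = "Lp_norm p (ball c (\<rho> / 2)) \<eta>"
    and ?g = "gagliardo s p (ball c \<rho>) \<eta>"
  define u v where "u = \<rho> powr (?N / p)" and "v = (\<rho> / 2) powr (?N / p)"
  have \<omega>: "?\<omega> > 0" by (rule omega_pos)
  have uv: "u > 0" "v > 0" using \<rho> by (simp_all add: u_def v_def)
  have "?\<omega> powr (1/p) * v * ?a \<le> ?\<omega> powr (1/p) * u * ?b + (2 * \<rho>) powr ((?N + s * p) / p) * ?g"
    using Lp_norm_ball_le_smaller_ball[OF \<eta>, of "\<rho> / 2"] \<rho> p s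
    by (simp add: measure_ball_powr u_def v_def)
  then have "?a / u \<le> ?b / v + (2 * \<rho>) powr ((?N + s * p) / p) / (?\<omega> powr (1/p) * u * v) * ?g"
    using uv \<omega> by (simp add: field_simps)
  also have "(2 * \<rho>) powr ((?N + s * p) / p) / (?\<omega> powr (1/p) * u * v) =
      (2 powr (2 * ?N + s * p) / ?\<omega>) powr (1/p) * \<rho> powr ((s * p - ?N) / p)"
  proof -
    have "2 powr ((?N + s * p) / p) * 2 powr (?N / p) = (2 powr (2 * ?N + s * p)) powr (1/p)"
      by (simp add: powr_powr powr_add[symmetric] add_divide_distrib)
    moreover have "\<rho> powr ((?N + s * p) / p) = \<rho> powr ((s * p - ?N) / p) * u * u"
      using \<rho> by (simp add: u_def powr_add[symmetric] add_divide_distrib diff_divide_distrib add.commute)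
    ultimately show ?thesis
      using \<rho> \<omega> uv by (simp add: v_def powr_mult powr_divide u_def[symmetric] field_simps)
  qed
  finally show ?thesis
    by (simp add: u_def v_def)
qed

lemma Lp_norm_dyadic_ball_step:
  fixes \<eta> :: "'a::euclidean_space \<Rightarrow> real"
  assumes \<eta>: "C1_closure (ball 0 1) \<eta>" and p: "p \<ge> 1" and s: "0 \<le> s" "s < 1"
  shows "Lp_norm p (ball 0 ((1/2) ^ k)) \<eta> / ((1/2) ^ k) powr (real DIM('a) / p) \<le>
    Lp_norm p (ball 0 ((1/2) ^ Suc k)) \<eta> / ((1/2) ^ Suc k) powr (real DIM('a) / p) +
    (2 powr (2 * real DIM('a) + s * p) / omega TYPE('a)) powr (1/p) *
      ((1/2) powr ((s * p - real DIM('a)) / p)) ^ k * gagliardo s p (ball 0 1) \<eta>"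
proof -
  let ?r = "(1/2::real) ^ k"
  have r: "0 < ?r" "?r \<le> 1"
    by (simp_all add: power_le_one)
  have "C1_closure (ball 0 ?r) \<eta>"
    using r by (intro C1_closure_subset[OF _ \<eta>]) auto
  note halving = Lp_norm_ball_halving[OF this r(1) p s]
  have "gagliardo s p (ball 0 ?r) \<eta> \<le> gagliardo s p (ball 0 1) \<eta>"
    using r gagliardo_pow_finite[OF \<eta>] s p by (intro gagliardo_mono_set) auto
  then show ?thesis
    using halving by (simp add: powr_power_swap mult_left_mono order_trans)
qed

lemma Lp_norm_dyadic_balls_le:
  fixes \<eta> :: "'a::euclidean_space \<Rightarrow> real"
  assumes \<eta>: "C1_closure (ball 0 1) \<eta>" and p: "p \<ge> 1" and s: "0 \<le> s" "s < 1"
    and sp: "s * p > real DIM('a)"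
  defines "K \<equiv> (2 powr (2 * real DIM('a) + s * p) / omega TYPE('a)) powr (1/p)"
    and "\<theta> \<equiv> (1/2) powr ((s * p - real DIM('a)) / p)"
  shows "Lp_norm p (ball 0 1) \<eta> \<le>
    Lp_norm p (ball 0 ((1/2) ^ n)) \<eta> / ((1/2) ^ n) powr (real DIM('a) / p) +
    K * gagliardo s p (ball 0 1) \<eta> / (1 - \<theta>)"
proof -
  let ?G = "gagliardo s p (ball (0::'a) 1) \<eta>"
  define a where "a k = Lp_norm p (ball (0::'a) ((1/2) ^ k)) \<eta> / ((1/2) ^ k) powr (real DIM('a) / p)" for k
  \<comment> \<open>This is where \<open>s p > N\<close> is used.\<close>
  have "(s * p - real DIM('a)) / p > 0"
    using sp p by simp
  then have \<theta>: "0 < \<theta>" "\<theta> < 1"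
    using powr_less_mono'[of "1/2" 0] by (auto simp: \<theta>_def)
  have KG: "K * ?G \<ge> 0"
    by (simp add: K_def gagliardo_def)
  have "a 0 \<le> a n + K * ?G * (\<Sum>k<n. \<theta> ^ k)"
  proof (induction n)
    case (Suc n)
    then show ?case
      using Lp_norm_dyadic_ball_step[OF \<eta> p s, of n]
      by (simp add: a_def K_def \<theta>_def distrib_left mult_ac)
  qed simp
  moreover have "(\<Sum>k<n. \<theta> ^ k) \<le> 1 / (1 - \<theta>)"
    using \<theta> by (simp add: sum_gp_strict divide_right_mono)
  ultimately have "a 0 \<le> a n + K * ?G * (1 / (1 - \<theta>))"
    using KG by (meson add_left_mono mult_left_mono order_trans)
  then show ?thesis
    by (simp add: a_def)
qed

lemma exists_dyadic_ball_Lp_norm_small: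
  fixes \<eta> :: "'a::euclidean_space \<Rightarrow> real"
  assumes \<eta>: "continuous_on (cball c 1) \<eta>" "\<eta> c = 0" and p: "p > 0" and \<epsilon>: "\<epsilon> > 0"
  shows "\<exists>n. Lp_norm p (ball c ((1/2) ^ n)) \<eta> / ((1/2) ^ n) powr (real DIM('a) / p) \<le> \<epsilon>"
proof -
  define \<delta> where "\<delta> = \<epsilon> / omega TYPE('a) powr (1/p)"
  have \<delta>: "\<delta> > 0"
    using \<epsilon> omega_pos[where 'a='a] by (simp add: \<delta>_def)
  then obtain d where d: "d > 0" "\<And>x. x \<in> cball c 1 \<Longrightarrow> dist x c < d \<Longrightarrow> \<bar>\<eta> x\<bar> < \<delta>"
    using \<eta> unfolding continuous_on_iff by (metis centre_in_cball dist_real_def zero_le_one diff_zero)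
  obtain n where n: "(1/2::real) ^ n < min d 1"
    using real_arch_pow_inv[of "min d 1" "1/2"] d by auto
  let ?r = "(1/2::real) ^ n"
  have "Lp_norm p (ball c ?r) \<eta> \<le> \<delta> * measure lborel (ball c ?r) powr (1/p)"
    using d n \<delta> p by (intro Lp_norm_le_sup) (auto simp: dist_commute less_imp_le)
  also have "\<dots> = \<epsilon> * ?r powr (real DIM('a) / p)"
    using omega_pos[where 'a='a] p by (simp add: measure_ball_powr \<delta>_def)
  finally show ?thesis
    by (intro exI[of _ n]) (simp add: divide_le_eq)
qed

lemma Lp_norm_le_gagliardo_if_vanishes_at_center:
  assumes s: "0 \<le> s" "s < 1" and p: "p \<ge> 1" and sp: "s * p > real DIM('a)"
  obtains C where "C \<ge> 0" "\<And>\<eta>. C1_closure (ball 0 1) \<eta> \<Longrightarrow> \<eta> 0 = 0 \<Longrightarrow>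
    Lp_norm p (ball (0::'a::euclidean_space) 1) \<eta> \<le> C * gagliardo s p (ball 0 1) \<eta>"
proof
  define K where "K = (2 powr (2 * real DIM('a) + s * p) / omega TYPE('a)) powr (1/p)"
  define \<theta> where "\<theta> = (1/2::real) powr ((s * p - real DIM('a)) / p)"
  have "(s * p - real DIM('a)) / p > 0"
    using sp p by simp
  then have "\<theta> < 1"
    using powr_less_mono'[of "1/2" 0] by (auto simp: \<theta>_def)
  then show "K / (1 - \<theta>) \<ge> 0"
    by (simp add: K_def)
  fix \<eta> :: "'a \<Rightarrow> real"
  assume \<eta>: "C1_closure (ball 0 1) \<eta>" and \<eta>0: "\<eta> 0 = 0"
  show "Lp_norm p (ball 0 1) \<eta> \<le> K / (1 - \<theta>) * gagliardo s p (ball 0 1) \<eta>"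
  proof (rule field_le_epsilon)
    fix \<epsilon> :: real assume "\<epsilon> > 0"
    moreover have "continuous_on (cball 0 1) \<eta>"
      using \<eta> by (simp add: C1_closure_def)
    ultimately obtain n where "Lp_norm p (ball 0 ((1/2) ^ n)) \<eta> / ((1/2) ^ n) powr (real DIM('a) / p) \<le> \<epsilon>"
      using exists_dyadic_ball_Lp_norm_small \<eta>0 p by fastforce
    with Lp_norm_dyadic_balls_le[OF \<eta> p s sp, of n]
    show "Lp_norm p (ball 0 1) \<eta> \<le> K / (1 - \<theta>) * gagliardo s p (ball 0 1) \<eta> + \<epsilon>"
      by (simp add: K_def \<theta>_def)
  qed
qed

section \<open>The constant \<open>\<Lambda>\<close> and the pointwise bound\<close>

definition Lambda_set :: "real \<Rightarrow> real \<Rightarrow> 'a::euclidean_space \<Rightarrow> real \<Rightarrow> real set" where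
  "Lambda_set s p x0 r = {gagliardo s p (ball x0 r) \<phi> powr p | \<phi>.
     C1_closure (ball x0 r) \<phi> \<and> Lp_norm p (ball x0 r) \<phi> = 1 \<and> \<phi> x0 = 0}"

lemma Lambda_eq_Inf: "Lambda s p x0 r = Inf (Lambda_set s p x0 r)"
  by (simp add: Lambda_def Lambda_set_def)

lemma rescaled_in_Lambda_set:
  fixes \<psi> :: "'a::euclidean_space \<Rightarrow> real"
  assumes p: "p > 0" and \<psi>: "C1_closure (ball c \<rho>) \<psi>" and \<rho>: "\<rho> > 0" and \<psi>c: "\<psi> c = 0"
    and L: "Lp_norm p (ball c \<rho>) \<psi> > 0"
  shows "\<rho> powr (s * p) * gagliardo s p (ball c \<rho>) \<psi> powr p / Lp_norm p (ball c \<rho>) \<psi> powr p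
    \<in> Lambda_set s p (0::'a) 1"
proof -
  let ?N = "DIM('a)" and ?B = "ball c \<rho>"
  define L g where "L = Lp_norm p ?B \<psi> powr p" and "g = gagliardo s p ?B \<psi> powr p"
  define k where "k = (\<rho> ^ ?N / L) powr (1/p)"
  define \<eta> where "\<eta> = (\<lambda>z. k * \<psi> (c + \<rho> *\<^sub>R z))"
  have L0: "L > 0" using L by (simp add: L_def)
  have k: "\<bar>k\<bar> powr p = \<rho> ^ ?N / L"
    using L0 \<rho> p by (simp add: k_def powr_powr)
  have cont: "continuous_on ?B \<psi>"
    using \<psi> \<rho> by (auto simp: C1_closure_def intro: continuous_on_subset)
  have cont1: "continuous_on (ball 0 1) (\<lambda>z. \<psi> (c + \<rho> *\<^sub>R z))"
    using \<rho> by (intro continuous_on_compose2[OF cont] continuous_intros) (auto simp: dist_norm)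
  have "Lp_norm p (ball 0 1) \<eta> powr p = \<bar>k\<bar> powr p * enn2real (Lp_pow p (ball 0 1) (\<lambda>z. \<psi> (c + \<rho> *\<^sub>R z)))"
    using p by (simp add: Lp_norm_powr \<eta>_def Lp_pow_cmult[OF _ cont1] enn2real_mult)
  also have "\<dots> = \<bar>k\<bar> powr p * (L / \<rho> ^ ?N)"
    using p \<rho> by (simp add: L_def Lp_norm_powr Lp_pow_ball_affine[OF \<rho> cont] enn2real_mult)
  finally have "Lp_norm p (ball 0 1) \<eta> powr p = 1"
    using L0 \<rho> by (simp add: k)
  then have "(Lp_norm p (ball 0 1) \<eta> powr p) powr (1/p) = 1"
    by simp
  then have norm: "Lp_norm p (ball 0 1) \<eta> = 1"
    using p by (simp add: Lp_norm_eq_Lp_pow powr_powr)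
  have "gagliardo s p (ball 0 1) \<eta> powr p =
      \<bar>k\<bar> powr p * enn2real (gagliardo_pow s p (ball 0 1) (\<lambda>z. \<psi> (c + \<rho> *\<^sub>R z)))"
    using p by (simp add: gagliardo_powr \<eta>_def gagliardo_pow_cmult[OF _ cont1] enn2real_mult)
  also have "\<dots> = \<bar>k\<bar> powr p * (g / \<rho> powr (real ?N - s * p))"
    using p \<rho> by (simp add: g_def gagliardo_powr gagliardo_pow_ball_affine[OF \<rho> cont] enn2real_mult)
  also have "\<dots> = \<rho> powr (s * p) * g / L"
    using \<rho> L0 by (simp add: k powr_diff powr_realpow)
  finally have energy: "gagliardo s p (ball 0 1) \<eta> powr p = \<rho> powr (s * p) * g / L" .
  have "C1_closure (ball 0 1) \<eta>" "\<eta> 0 = 0"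
    using C1_closure_ball_affine[OF \<psi> \<rho>] \<psi>c by (simp_all add: \<eta>_def)
  with norm energy[symmetric] show ?thesis
    unfolding Lambda_set_def L_def g_def by blast
qed

lemma Lambda_Poincare:
  fixes \<psi> :: "'a::euclidean_space \<Rightarrow> real"
  assumes \<Lambda>: "Lambda s p (0::'a) 1 > 0" and p: "p > 0"
    and \<psi>: "C1_closure (ball c \<rho>) \<psi>" and \<rho>: "\<rho> > 0" and \<psi>c: "\<psi> c = 0"
  shows "Lp_norm p (ball c \<rho>) \<psi> \<le> \<rho> powr s * gagliardo s p (ball c \<rho>) \<psi> / Lambda s p (0::'a) 1 powr (1/p)"
proof (cases "Lp_norm p (ball c \<rho>) \<psi> = 0")
  case False
  let ?L = "Lp_norm p (ball c \<rho>) \<psi>" and ?g = "gagliardo s p (ball c \<rho>) \<psi>" and ?\<Lambda> = "Lambda s p (0::'a) 1"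
  have L: "?L > 0"
    using False by (simp add: Lp_norm_eq_Lp_pow less_le)
  have "?\<Lambda> \<le> \<rho> powr (s * p) * ?g powr p / ?L powr p"
    unfolding Lambda_eq_Inf
    by (rule cInf_lower[OF rescaled_in_Lambda_set[OF p \<psi> \<rho> \<psi>c L]])
      (auto simp: Lambda_set_def intro: bdd_belowI[of _ 0])
  then have "?L powr p \<le> \<rho> powr (s * p) * ?g powr p / ?\<Lambda>"
    using \<Lambda> L by (simp add: field_simps)
  then have "(?L powr p) powr (1/p) \<le> (\<rho> powr (s * p) * ?g powr p / ?\<Lambda>) powr (1/p)"
    using p by (intro powr_mono2) auto
  then show ?thesis
    using p \<rho> \<Lambda> L by (simp add: powr_powr powr_mult powr_divide gagliardo_def)
qed (simp add: gagliardo_def)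

lemma Lambda_pos:
  assumes s: "0 \<le> s" "s < 1" and p: "p \<ge> 1" and sp: "s * p > real DIM('a)"
    and ne: "Lambda_set s p (0::'a::euclidean_space) 1 \<noteq> {}"
  shows "Lambda s p (0::'a) 1 > 0"
proof -
  obtain C where C: "C \<ge> 0" "\<And>\<eta>. C1_closure (ball 0 1) \<eta> \<Longrightarrow> \<eta> 0 = 0 \<Longrightarrow>
      Lp_norm p (ball (0::'a) 1) \<eta> \<le> C * gagliardo s p (ball 0 1) \<eta>"
    using Lp_norm_le_gagliardo_if_vanishes_at_center[OF s p sp] by blast
  have normalized: "1 \<le> C * gagliardo s p (ball 0 1) \<eta>"
    if "C1_closure (ball 0 1) \<eta>" "Lp_norm p (ball (0::'a) 1) \<eta> = 1" "\<eta> 0 = 0" for \<eta>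
    using C(2)[OF that(1,3)] that(2) by simp
  from ne have "C > 0"
    using C(1) normalized by (fastforce simp: Lambda_set_def)
  have lower: "(1 / C) powr p \<le> x" if "x \<in> Lambda_set s p (0::'a) 1" for x
  proof -
    from that obtain \<eta> where x: "x = gagliardo s p (ball 0 1) \<eta> powr p"
      and \<eta>: "C1_closure (ball 0 1) \<eta>" "Lp_norm p (ball (0::'a) 1) \<eta> = 1" "\<eta> 0 = 0"
      unfolding Lambda_set_def by blast
    from normalized[OF \<eta>] have "1 / C \<le> gagliardo s p (ball 0 1) \<eta>"
      using \<open>C > 0\<close> by (simp add: field_simps)
    then show ?thesis
      unfolding x using \<open>C > 0\<close> p by (intro powr_mono2) auto
  qed
  have "0 < (1 / C) powr p"
    using \<open>C > 0\<close> by simp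
  also have "\<dots> \<le> Lambda s p (0::'a) 1"
    unfolding Lambda_eq_Inf by (rule cInf_greatest[OF ne lower])
  finally show ?thesis .
qed

lemma Lambda_set_nonempty:
  fixes \<psi> :: "'a::euclidean_space \<Rightarrow> real"
  assumes p: "p > 0" and \<psi>: "C1_closure (ball c \<rho>) \<psi>" and \<rho>: "\<rho> > 0" and \<psi>c: "\<psi> c = 0"
    and y: "y \<in> ball c \<rho>" "\<psi> y \<noteq> 0"
  shows "Lambda_set s p (0::'a) 1 \<noteq> {}"
proof -
  have cont: "continuous_on (cball c \<rho>) \<psi>"
    using \<psi> \<rho> by (simp add: C1_closure_def)
  have "Lp_pow p (ball c \<rho>) \<psi> > 0"
    using Lp_pow_pos[OF open_ball continuous_on_subset[OF cont ball_subset_cball] y] p by simp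
  then have "enn2real (Lp_pow p (ball c \<rho>) \<psi>) > 0"
    using Lp_pow_ball_finite[OF cont] p by (simp add: enn2real_positive_iff)
  then have "Lp_norm p (ball c \<rho>) \<psi> > 0"
    by (simp add: Lp_norm_eq_Lp_pow)
  then show ?thesis
    using rescaled_in_Lambda_set[OF p \<psi> \<rho> \<psi>c, of s] by auto
qed

lemma Lp_norm_oscillation_le_Lambda:
  fixes \<phi> :: "'a::euclidean_space \<Rightarrow> real"
  assumes \<Lambda>: "Lambda s p (0::'a) 1 > 0" and p: "p > 0" and s: "s < 1"
    and \<phi>: "C1_closure (ball c r) \<phi>" and r: "r > 0" and R: "R > 0" "ball x R \<subseteq> ball c r"
  shows "Lp_norm p (ball x R) (\<lambda>y. \<phi> y - \<phi> x) \<le>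
    R powr s * gagliardo s p (ball c r) \<phi> / Lambda s p (0::'a) 1 powr (1/p)"
proof -
  have "C1_closure (ball x R) (\<lambda>y. \<phi> y - \<phi> x)"
    using C1_closure_subset[OF R(2) \<phi>] by (rule C1_closure_diff_const)
  then have "Lp_norm p (ball x R) (\<lambda>y. \<phi> y - \<phi> x) \<le>
      R powr s * gagliardo s p (ball x R) \<phi> / Lambda s p (0::'a) 1 powr (1/p)"
    using Lambda_Poincare[OF \<Lambda> p, of x R "\<lambda>y. \<phi> y - \<phi> x"] R
    by (simp add: gagliardo_def gagliardo_pow_diff_const)
  also have "gagliardo s p (ball x R) \<phi> \<le> gagliardo s p (ball c r) \<phi>"
    using gagliardo_mono_set[OF R(2) gagliardo_pow_finite[OF \<phi> r s p] p] .
  finally show ?thesis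
    using \<Lambda> by (simp add: divide_right_mono mult_left_mono)
qed

lemma abs_mult_ball_volume_le_Lambda:
  fixes \<phi> :: "'a::euclidean_space \<Rightarrow> real"
  assumes \<Lambda>: "Lambda s p (0::'a) 1 > 0" and p: "p \<ge> 1" and s: "s < 1"
    and \<phi>: "C1_closure (ball x0 r) \<phi>" and r: "r > 0" and \<phi>x0: "\<phi> x0 = 0" and x: "x \<in> ball x0 r"
  defines "R \<equiv> r - dist x x0"
  shows "\<bar>\<phi> x\<bar> * (omega TYPE('a) powr (1/p) * R powr (real DIM('a) / p)) \<le>
    (r powr s + R powr s) * gagliardo s p (ball x0 r) \<phi> / Lambda s p (0::'a) 1 powr (1/p)"
proof -
  let ?\<Lambda> = "Lambda s p (0::'a) 1" and ?g = "gagliardo s p (ball x0 r) \<phi>"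
  have R: "R > 0" "ball x R \<subseteq> ball x0 r"
    using x by (auto simp: R_def dist_commute ball_subset_ball_iff)
  have cont: "continuous_on (cball x0 r) \<phi>"
    using \<phi> r by (simp add: C1_closure_def)
  have "cball x R \<subseteq> cball x0 r"
    using closure_mono[OF R(2)] R(1) r by simp
  then have "continuous_on (cball x R) \<phi>"
    by (rule continuous_on_subset[OF cont])
  from abs_mult_measure_ball_le_Lp_norm[OF this p]
  have "\<bar>\<phi> x\<bar> * (omega TYPE('a) powr (1/p) * R powr (real DIM('a) / p)) \<le>
      Lp_norm p (ball x R) \<phi> + Lp_norm p (ball x R) (\<lambda>y. \<phi> y - \<phi> x)"
    using R p by (simp add: measure_ball_powr)
  also have "Lp_norm p (ball x R) \<phi> \<le> r powr s * ?g / ?\<Lambda> powr (1/p)"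
    using order_trans[OF Lp_norm_mono_set[OF R(2) Lp_pow_ball_finite[OF cont]]
        Lambda_Poincare[OF \<Lambda> _ \<phi> r \<phi>x0]] p by simp
  also have "Lp_norm p (ball x R) (\<lambda>y. \<phi> y - \<phi> x) \<le> R powr s * ?g / ?\<Lambda> powr (1/p)"
    using Lp_norm_oscillation_le_Lambda[OF \<Lambda> _ s \<phi> r R] p by simp
  finally show ?thesis
    by (simp add: add_divide_distrib distrib_right)
qed

theorem lemma4p1:
  fixes s p r :: real and x0 :: "'a::euclidean_space" and \<phi> :: "'a \<Rightarrow> real"
  assumes "0 < s" "s < 1" "1 < p" "s * p > real DIM('a)"
    and "r > 0" and "C1_closure (ball x0 r) \<phi>" and "\<phi> x0 = 0"
  shows "\<forall>x\<in>ball x0 r. \<bar>\<phi> x\<bar> \<le>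
     (1 / (omega TYPE('a) * Lambda s p (0::'a) 1)) powr (1 / p) *
     (((r - dist x x0) powr s + r powr s) / (r - dist x x0) powr (real DIM('a) / p)) *
     gagliardo s p (ball x0 r) \<phi>"
proof (intro ballI, goal_cases)
  case (1 x)
  note s = assms(1,2) and p = assms(3) and sp = assms(4) and r = assms(5) and \<phi> = assms(6)
    and \<phi>x0 = assms(7) and x = 1
  show ?case
  proof (cases "\<phi> x = 0")
    case False
    have \<Lambda>: "Lambda s p (0::'a) 1 > 0"
      using Lambda_pos[OF _ _ _ sp Lambda_set_nonempty[OF _ \<phi> r \<phi>x0 x False]] s p by simp
    let ?V = "omega TYPE('a) powr (1/p) * (r - dist x x0) powr (real DIM('a) / p)"
    have nz: "r - dist x x0 \<noteq> 0" "omega TYPE('a) \<noteq> 0" "Lambda s p (0::'a) 1 \<noteq> 0"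
      using x omega_pos[where 'a='a] \<Lambda> by (auto simp: dist_commute)
    then have V: "?V > 0"
      by simp
    have eq: "(1 / (omega TYPE('a) * Lambda s p (0::'a) 1)) powr (1 / p) *
        (((r - dist x x0) powr s + r powr s) / (r - dist x x0) powr (real DIM('a) / p)) *
        gagliardo s p (ball x0 r) \<phi> =
      (r powr s + (r - dist x x0) powr s) * gagliardo s p (ball x0 r) \<phi> /
        Lambda s p (0::'a) 1 powr (1/p) / ?V"
      using nz by (simp add: powr_divide powr_mult field_simps)
    show ?thesis
      unfolding eq pos_le_divide_eq[OF V]
      using abs_mult_ball_volume_le_Lambda[OF \<Lambda> _ s(2) \<phi> r \<phi>x0 x] p by simp
  qed (simp add: gagliardo_def)
qed

end
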